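(* Let $\Sigma$ be a finite nonempty alphabet, $L\subseteq\Sigma^*$ and $\kappa(L)=n\ge 1$. If $L$ is a right ideal or a prefix-closed language, then $\sigma(L)\le n^{n-1}$. This bound is tight: for $n=1$ whenever $|\Sigma|\ge 1$, for $n=2$ whenever $|\Sigma|\ge 2$, for $n=3$ whenever $|\Sigma|\ge 3$, and for $n\ge 4$ whenever $|\Sigma|\ge 4$, there is a language $L$ over $\Sigma$ of the respective type with $\kappa(L)=n$ and $\sigma(L)=n^{n-1}$. Moreover, these alphabet sizes cannot be reduced: over a smaller alphabet no such language with $\kappa(L)=n$ attains $\sigma(L)=n^{n-1}$.
   Context: For a language $L\subseteq\Sigma^*$ and $w\in\Sigma^*$, the (left) quotient is $w^{-1}L=\{x\in\Sigma^*: wx\in L\}$; the quotient complexity $\kappa(L)$ is the number of distinct quotients of $L$ (equal to the number of states of a minimal DFA of $L$). The syntactic congruence of $L$ is $x\approx_L y$ iff for all $u,v\in\Sigma^*$, $uxv\in L\Leftrightarrow uyv\in L$; the syntactic semigroup is $\Sigma^+/\approx_L$, and the syntactic complexity $\sigma(L)$ is its cardinality (equivalently, the number of transformations of the state set of a minimal DFA of $L$ induced by nonempty words). A language $L$ is a right ideal if it is nonempty and $L=L\Sigma^*$. It is prefix-closed if $w\in L$ implies every prefix of $w$ is in $L$. *)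

theory Defs
  imports Main
begin

definition left_quotient :: "'a set \<Rightarrow> 'a list \<Rightarrow> 'a list set \<Rightarrow> 'a list set" where
  "left_quotient S w L = {x \<in> lists S. w @ x \<in> L}"

definition quotients :: "'a set \<Rightarrow> 'a list set \<Rightarrow> 'a list set set" where
  "quotients S L = {left_quotient S w L | w. w \<in> lists S}"

definition quot_complexity :: "'a set \<Rightarrow> 'a list set \<Rightarrow> nat" where
  "quot_complexity S L = card (quotients S L)"

definition synt_cong :: "'a set \<Rightarrow> 'a list set \<Rightarrow> ('a list \<times> 'a list) set" where
  "synt_cong S L = {(x, y). x \<in> lists S \<and> y \<in> lists S \<and>
     (\<forall>u \<in> lists S. \<forall>v \<in> lists S. (u @ x @ v \<in> L) = (u @ y @ v \<in> L))}"

text \<open>Cardinality of the syntactic semigroup: nonempty words modulo the syntactic congruence.\<close>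
definition synt_complexity :: "'a set \<Rightarrow> 'a list set \<Rightarrow> nat" where
  "synt_complexity S L = card ((lists S - {[]}) // synt_cong S L)"

definition right_ideal :: "'a set \<Rightarrow> 'a list set \<Rightarrow> bool" where
  "right_ideal S L \<longleftrightarrow> L \<noteq> {} \<and> L = {u @ v | u v. u \<in> L \<and> v \<in> lists S}"

definition prefix_closed :: "'a list set \<Rightarrow> bool" where
  "prefix_closed L \<longleftrightarrow> (\<forall>w \<in> L. \<forall>u v. w = u @ v \<longrightarrow> u \<in> L)"

end

theory Submission
  imports Defs "HOL-Library.FuncSet" "HOL-Combinatorics.Permutations"
begin

text \<open>Every word acts on the quotients of L, and the syntactic semigroup is the semigroup of these
  actions. A right ideal has the sink quotient lists S, and a prefix-closed language other than
  lists S has the sink quotient {}; every action fixes the sink, which leaves at most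
  n^(n-1) transformations.

  Conversely, the transformations of {0, ..., n-1} fixing 0 are generated by a cycle and a
  transposition of {1, ..., n-1}, a map merging two nonzero states and a map sending a nonzero
  state to 0. Letting the letters act by these generators, the words leading from n-1 to 0 form a
  right ideal with n quotients and n^(n-1) transformations, and its complement is prefix-closed.

  If all n^(n-1) sink-fixing transformations occur, then the identity needs a letter acting as
  a permutation, the constant map to the sink a letter sending a non-sink state to the sink,
  a merge of two non-sink states a letter that is neither of these, and two non-commuting
  transpositions a second permutation letter.\<close>

section \<open>Quotients and transformations\<close>

definition run :: "('a \<Rightarrow> 's \<Rightarrow> 's) \<Rightarrow> 's \<Rightarrow> 'a list \<Rightarrow> 's" where
  "run \<delta> q w = foldl (\<lambda>p a. \<delta> a p) q w"

lemma run_Nil [simp]: "run \<delta> q [] = q"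
  by (simp add: run_def)

lemma run_Cons [simp]: "run \<delta> q (a # w) = run \<delta> (\<delta> a q) w"
  by (simp add: run_def)

lemma run_append: "run \<delta> q (x @ y) = run \<delta> (run \<delta> q x) y"
  by (simp add: run_def)

lemma run_in_states: "q \<in> Q \<Longrightarrow> \<forall>a\<in>set w. \<delta> a \<in> Q \<rightarrow> Q \<Longrightarrow> run \<delta> q w \<in> Q"
  by (induction w arbitrary: q) auto

lemma run_fixed_point: "\<forall>a\<in>set w. \<delta> a z = z \<Longrightarrow> run \<delta> z w = z"
  by (induction w) auto

lemma left_quotient_append:
  "y \<in> lists S \<Longrightarrow> left_quotient S (x @ y) K = left_quotient S y (left_quotient S x K)"
  by (auto simp: left_quotient_def)

lemma quotients_subset_lists: "K \<in> quotients S L \<Longrightarrow> K \<subseteq> lists S"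
  by (auto simp: quotients_def left_quotient_def)

lemma left_quotient_in_quotients:
  assumes "K \<in> quotients S L" "x \<in> lists S"
  shows "left_quotient S x K \<in> quotients S L"
proof -
  obtain w where "w \<in> lists S" "K = left_quotient S w L"
    using assms(1) by (auto simp: quotients_def)
  then have "left_quotient S x K = left_quotient S (w @ x) L" "w @ x \<in> lists S"
    using assms(2) by (simp_all add: left_quotient_append)
  then show ?thesis
    unfolding quotients_def by blast
qed

lemma left_quotient_eq_run:
  "K \<subseteq> lists S \<Longrightarrow> w \<in> lists S \<Longrightarrow> left_quotient S w K = run (\<lambda>a. left_quotient S [a]) K w"
proof (induction w arbitrary: K)
  case Nil
  then show ?case by (auto simp: left_quotient_def)
next
  case (Cons a w)
  have "left_quotient S [a] K \<subseteq> lists S"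
    by (auto simp: left_quotient_def)
  then show ?case
    using Cons left_quotient_append[of w S "[a]" K] by simp
qed

lemma restrict_eq_restrict_iff: "restrict f A = restrict g A \<longleftrightarrow> (\<forall>x\<in>A. f x = g x)"
  by (metis restrict_apply' restrict_ext)

definition transformation :: "'a set \<Rightarrow> 'a list set \<Rightarrow> 'a list \<Rightarrow> 'a list set \<Rightarrow> 'a list set" where
  "transformation S L x = restrict (left_quotient S x) (quotients S L)"

lemma synt_cong_iff_transformation_eq:
  assumes "x \<in> lists S" "y \<in> lists S"
  shows "(x, y) \<in> synt_cong S L \<longleftrightarrow> transformation S L x = transformation S L y"
proof -
  have "(x, y) \<in> synt_cong S L \<longleftrightarrow>
      (\<forall>u\<in>lists S. left_quotient S x (left_quotient S u L) = left_quotient S y (left_quotient S u L))"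
    using assms by (auto simp: synt_cong_def left_quotient_def set_eq_iff)
  also have "\<dots> \<longleftrightarrow> (\<forall>K\<in>quotients S L. left_quotient S x K = left_quotient S y K)"
    by (auto simp: quotients_def)
  also have "\<dots> \<longleftrightarrow> transformation S L x = transformation S L y"
    by (simp add: transformation_def restrict_eq_restrict_iff)
  finally show ?thesis .
qed

lemma card_quotient_eq_card_image:
  assumes "\<And>x y. (x, y) \<in> R \<longleftrightarrow> x \<in> B \<and> y \<in> B \<and> f x = f y" and "A \<subseteq> B"
  shows "card (A // R) = card (f ` A)"
proof -
  have "R `` {x} = {y \<in> B. f y = f x}" if "x \<in> A" for x
    using that assms by auto
  then have "A // R = (\<lambda>v. {y \<in> B. f y = v}) ` f ` A"
    unfolding quotient_def by auto
  moreover have "inj_on (\<lambda>v. {y \<in> B. f y = v}) (f ` A)"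
    using assms(2) by (auto intro!: inj_onI)
  ultimately show ?thesis
    by (simp add: card_image)
qed

lemma card_image_eq_if_same_kernel:
  assumes "\<And>x y. x \<in> A \<Longrightarrow> y \<in> A \<Longrightarrow> f x = f y \<longleftrightarrow> g x = g y"
  shows "card (f ` A) = card (g ` A)"
proof -
  define R where "R = {(x, y). x \<in> A \<and> y \<in> A \<and> f x = f y}"
  have "card (A // R) = card (f ` A)" "card (A // R) = card (g ` A)"
    by (rule card_quotient_eq_card_image; auto simp: R_def assms)+
  then show ?thesis by simp
qed

lemma synt_complexity_eq_card_transformations:
  "synt_complexity S L = card (transformation S L ` (lists S - {[]}))"
  unfolding synt_complexity_def
proof (rule card_quotient_eq_card_image[where B = "lists S"])
  show "(x, y) \<in> synt_cong S L \<longleftrightarrow>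
      x \<in> lists S \<and> y \<in> lists S \<and> transformation S L x = transformation S L y" for x y
    using synt_cong_iff_transformation_eq[of x S y L] by (auto simp: synt_cong_def)
qed auto

section \<open>The upper bound\<close>

definition sink_fixing_maps :: "'s set \<Rightarrow> 's \<Rightarrow> ('s \<Rightarrow> 's) set" where
  "sink_fixing_maps Q z = (\<Pi>\<^sub>E q\<in>Q. if q = z then {z} else Q)"

lemma restrict_in_sink_fixing_maps_iff:
  "z \<in> Q \<Longrightarrow> restrict f Q \<in> sink_fixing_maps Q z \<longleftrightarrow> f \<in> Q \<rightarrow> Q \<and> f z = z"
  unfolding sink_fixing_maps_def restrict_PiE_iff Pi_iff by (metis singletonD singletonI)

lemma card_sink_fixing_maps:
  assumes "finite Q" "z \<in> Q"
  shows "card (sink_fixing_maps Q z) = card Q ^ (card Q - 1)"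
proof -
  have "card (sink_fixing_maps Q z) = (\<Prod>q\<in>Q. if q = z then 1 else card Q)"
    unfolding sink_fixing_maps_def using assms(1) by (simp add: card_PiE if_distrib cong: if_cong)
  also have "\<dots> = (\<Prod>q\<in>Q - {z}. card Q)"
    using assms by (simp add: prod.If_cases Int_absorb1 Diff_eq[symmetric])
  also have "\<dots> = card Q ^ (card Q - 1)"
    using assms by (simp add: card_Diff_singleton)
  finally show ?thesis .
qed

lemma left_quotient_lists: "x \<in> lists S \<Longrightarrow> left_quotient S x (lists S) = lists S"
  by (auto simp: left_quotient_def)

lemma left_quotient_empty: "left_quotient S x {} = {}"
  by (simp add: left_quotient_def)

lemma sink_quotient_exists:
  assumes "L \<subseteq> lists S" "right_ideal S L \<or> prefix_closed L"
  obtains K0 where "K0 \<in> quotients S L" "\<And>x. x \<in> lists S \<Longrightarrow> left_quotient S x K0 = K0"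
proof -
  have "\<exists>w\<in>lists S. left_quotient S w L = lists S \<or> left_quotient S w L = {}"
  proof (cases "right_ideal S L")
    case True
    then obtain w where "w \<in> L"
      by (auto simp: right_ideal_def)
    have "w @ v \<in> L" if "v \<in> lists S" for v
      using True \<open>w \<in> L\<close> that unfolding right_ideal_def by blast
    then have "left_quotient S w L = lists S"
      by (auto simp: left_quotient_def)
    then show ?thesis
      using \<open>w \<in> L\<close> assms(1) by blast
  next
    case False
    then have "prefix_closed L"
      using assms(2) by blast
    show ?thesis
    proof (cases "L = lists S")
      case True
      then show ?thesis
        by (auto simp: left_quotient_def intro!: bexI[of _ "[]"])
    next
      case False
      then obtain w where "w \<in> lists S" "w \<notin> L"
        using assms(1) by blast
      moreover from this have "left_quotient S w L = {}"
        using \<open>prefix_closed L\<close> by (auto simp: left_quotient_def prefix_closed_def)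
      ultimately show ?thesis
        by blast
    qed
  qed
  then obtain w where w: "w \<in> lists S" "left_quotient S w L = lists S \<or> left_quotient S w L = {}"
    by blast
  then have "left_quotient S w L \<in> quotients S L"
    unfolding quotients_def by blast
  moreover have "left_quotient S x (left_quotient S w L) = left_quotient S w L" if "x \<in> lists S" for x
    using w(2) that left_quotient_lists left_quotient_empty by metis
  ultimately show thesis
    using that by blast
qed

lemma transformations_subset_sink_fixing_maps:
  assumes "K0 \<in> quotients S L" "\<And>x. x \<in> lists S \<Longrightarrow> left_quotient S x K0 = K0"
  shows "transformation S L ` lists S \<subseteq> sink_fixing_maps (quotients S L) K0"
proof
  fix f assume "f \<in> transformation S L ` lists S"
  then obtain x where "x \<in> lists S" "f = transformation S L x"
    by blast
  then show "f \<in> sink_fixing_maps (quotients S L) K0"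
    unfolding transformation_def
    by (simp add: restrict_in_sink_fixing_maps_iff[OF assms(1)] assms(2) left_quotient_in_quotients)
qed

theorem synt_complexity_le:
  assumes "L \<subseteq> lists S" "right_ideal S L \<or> prefix_closed L" "quot_complexity S L = n" "n \<ge> 1"
  shows "synt_complexity S L \<le> n ^ (n - 1)"
proof -
  obtain K0 where K0: "K0 \<in> quotients S L" "\<And>x. x \<in> lists S \<Longrightarrow> left_quotient S x K0 = K0"
    using sink_quotient_exists[OF assms(1,2)] by blast
  have finite: "finite (quotients S L)" and card: "card (quotients S L) = n"
    using assms(3,4) by (auto simp: quot_complexity_def intro: card_ge_0_finite)
  have "transformation S L ` (lists S - {[]}) \<subseteq> sink_fixing_maps (quotients S L) K0"
    using transformations_subset_sink_fixing_maps[OF K0] by blast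
  moreover have "finite (sink_fixing_maps (quotients S L) K0)"
    using finite by (simp add: sink_fixing_maps_def finite_PiE)
  ultimately show ?thesis
    using card_mono card_sink_fixing_maps[OF finite K0(1)] card
    by (fastforce simp: synt_complexity_eq_card_transformations)
qed

section \<open>Letters needed to realise every sink-fixing transformation\<close>

definition avoids_sink :: "'s set \<Rightarrow> 's \<Rightarrow> ('s \<Rightarrow> 's) \<Rightarrow> bool" where
  "avoids_sink Q z f \<longleftrightarrow> (\<forall>q\<in>Q. f q = z \<longrightarrow> q = z)"

lemma inj_on_run_iff:
  assumes "finite Q" "\<forall>a\<in>set w. \<delta> a \<in> Q \<rightarrow> Q"
  shows "inj_on (\<lambda>q. run \<delta> q w) Q \<longleftrightarrow> (\<forall>a\<in>set w. inj_on (\<delta> a) Q)"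
  using assms(2)
proof (induction w)
  case Nil
  then show ?case by (simp add: inj_on_def)
next
  case (Cons a w)
  have "inj_on ((\<lambda>q. run \<delta> q w) \<circ> \<delta> a) Q \<longleftrightarrow> inj_on (\<delta> a) Q \<and> inj_on (\<lambda>q. run \<delta> q w) Q"
  proof
    assume inj: "inj_on ((\<lambda>q. run \<delta> q w) \<circ> \<delta> a) Q"
    then have inj_a: "inj_on (\<delta> a) Q"
      by (rule inj_on_imageI2)
    moreover have "\<delta> a ` Q = Q"
      using endo_inj_surj[OF assms(1) _ inj_a] Cons.prems by auto
    ultimately show "inj_on (\<delta> a) Q \<and> inj_on (\<lambda>q. run \<delta> q w) Q"
      using comp_inj_on_iff inj by metis
  next
    assume "inj_on (\<delta> a) Q \<and> inj_on (\<lambda>q. run \<delta> q w) Q"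
    then show "inj_on ((\<lambda>q. run \<delta> q w) \<circ> \<delta> a) Q"
      using Cons.prems by (auto intro: comp_inj_on inj_on_subset)
  qed
  then show ?case
    using Cons by (simp add: comp_def)
qed

lemma avoids_sink_run:
  "\<forall>a\<in>set w. \<delta> a \<in> Q \<rightarrow> Q \<and> avoids_sink Q z (\<delta> a) \<Longrightarrow> avoids_sink Q z (\<lambda>q. run \<delta> q w)"
proof (induction w)
  case (Cons a w)
  show ?case
  proof (unfold avoids_sink_def, intro ballI impI)
    fix q assume q: "q \<in> Q" "run \<delta> q (a # w) = z"
    have "\<delta> a q \<in> Q"
      using Cons.prems q(1) by auto
    moreover have "avoids_sink Q z (\<lambda>q. run \<delta> q w)"
      using Cons by simp
    ultimately have "\<delta> a q = z"
      using q(2) unfolding avoids_sink_def by simp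
    then show "q = z"
      using Cons.prems q(1) by (simp add: avoids_sink_def)
  qed
qed (simp add: avoids_sink_def)

text \<open>Reading the word from the left, the first letter entering the sink would make the whole
  word enter it, and an injective first letter permutes the states and can be skipped.\<close>

lemma ex_letter_avoiding_sink_not_inj:
  assumes "finite Q" "\<forall>a\<in>set w. \<delta> a \<in> Q \<rightarrow> Q" "\<forall>a\<in>set w. \<delta> a z = z"
    and "avoids_sink Q z (\<lambda>q. run \<delta> q w)" "\<not> inj_on (\<lambda>q. run \<delta> q w) Q"
  shows "\<exists>a\<in>set w. avoids_sink Q z (\<delta> a) \<and> \<not> inj_on (\<delta> a) Q"
  using assms(2-)
proof (induction w)
  case Nil
  then show ?case by (simp add: inj_on_def)
next
  case (Cons b w)
  show ?case
  proof (cases "avoids_sink Q z (\<delta> b) \<and> \<not> inj_on (\<delta> b) Q")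
    case True
    then show ?thesis by simp
  next
    case False
    have "avoids_sink Q z (\<delta> b)"
    proof (unfold avoids_sink_def, intro ballI impI)
      fix q assume "q \<in> Q" "\<delta> b q = z"
      then have "run \<delta> q (b # w) = z"
        using Cons.prems(2) run_fixed_point[of w \<delta> z] by simp
      then show "q = z"
        using Cons.prems(3) \<open>q \<in> Q\<close> by (simp add: avoids_sink_def)
    qed
    with False have inj_b: "inj_on (\<delta> b) Q"
      by blast
    then have image_b: "\<delta> b ` Q = Q"
      using endo_inj_surj[OF assms(1)] Cons.prems(1) by auto
    have "\<not> inj_on (\<lambda>q. run \<delta> q w) Q"
    proof
      assume "inj_on (\<lambda>q. run \<delta> q w) Q"
      then have "\<forall>a\<in>set (b # w). inj_on (\<delta> a) Q"
        using inj_b inj_on_run_iff[OF assms(1), of w \<delta>] Cons.prems(1) by simp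
      then show False
        using Cons.prems(4) inj_on_run_iff[OF assms(1) Cons.prems(1)] by blast
    qed
    moreover have "avoids_sink Q z (\<lambda>q. run \<delta> q w)"
    proof (unfold avoids_sink_def, intro ballI impI)
      fix q assume "q \<in> Q" "run \<delta> q w = z"
      then obtain p where "p \<in> Q" "q = \<delta> b p"
        using image_b by blast
      then have "p = z"
        using Cons.prems(3) \<open>run \<delta> q w = z\<close> by (simp add: avoids_sink_def)
      then show "q = z"
        using Cons.prems(2) \<open>q = \<delta> b p\<close> by simp
    qed
    ultimately show ?thesis
      using Cons by auto
  qed
qed

locale maximal_sink_automaton =
  fixes S :: "'a set" and Q :: "'s set" and z :: 's and \<delta> :: "'a \<Rightarrow> 's \<Rightarrow> 's"
  assumes finite_states: "finite Q"
    and sink_in_states: "z \<in> Q"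
    and letter_maps_states: "a \<in> S \<Longrightarrow> \<delta> a \<in> Q \<rightarrow> Q"
    and letter_fixes_sink: "a \<in> S \<Longrightarrow> \<delta> a z = z"
    and sink_fixing_realised:
      "f \<in> Q \<rightarrow> Q \<Longrightarrow> f z = z \<Longrightarrow> \<exists>w\<in>lists S. w \<noteq> [] \<and> (\<forall>q\<in>Q. run \<delta> q w = f q)"
begin

lemma letters_map_states: "w \<in> lists S \<Longrightarrow> \<forall>a\<in>set w. \<delta> a \<in> Q \<rightarrow> Q"
  using letter_maps_states by (simp add: in_lists_conv_set)

lemma letters_fix_sink: "w \<in> lists S \<Longrightarrow> \<forall>a\<in>set w. \<delta> a z = z"
  using letter_fixes_sink by (simp add: in_lists_conv_set)

lemma run_word_in_states: "q \<in> Q \<Longrightarrow> w \<in> lists S \<Longrightarrow> run \<delta> q w \<in> Q"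
  using run_in_states[where \<delta> = \<delta> and Q = Q] letters_map_states by blast

lemma run_word_from_sink: "w \<in> lists S \<Longrightarrow> run \<delta> z w = z"
  using run_fixed_point[where \<delta> = \<delta> and z = z] letters_fix_sink by blast

lemma injective_letter_avoids_sink:
  assumes "a \<in> S" "inj_on (\<delta> a) Q"
  shows "avoids_sink Q z (\<delta> a)"
proof (unfold avoids_sink_def, intro ballI impI)
  fix q assume "q \<in> Q" "\<delta> a q = z"
  then have "\<delta> a q = \<delta> a z"
    using letter_fixes_sink[OF assms(1)] by simp
  then show "q = z"
    by (rule inj_onD[OF assms(2) _ \<open>q \<in> Q\<close> sink_in_states])
qed

lemma letters_injective_if_run_injective:
  assumes "w \<in> lists S" "inj_on (\<lambda>q. run \<delta> q w) Q" "a \<in> set w"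
  shows "inj_on (\<delta> a) Q"
proof -
  show ?thesis
    using inj_on_run_iff[OF finite_states letters_map_states[OF assms(1)]] assms(2,3) by blast
qed

lemma ex_injective_letter: "\<exists>a\<in>S. inj_on (\<delta> a) Q"
proof -
  obtain w where w: "w \<in> lists S" "w \<noteq> []" "\<forall>q\<in>Q. run \<delta> q w = q"
    using sink_fixing_realised[of "\<lambda>q. q"] by auto
  then have "inj_on (\<lambda>q. run \<delta> q w) Q"
    by (simp add: inj_on_def)
  moreover obtain a where "a \<in> set w"
    using w(2) by (cases w) auto
  ultimately show ?thesis
    using letters_injective_if_run_injective w(1) in_listsD by metis
qed

lemma ex_letter_entering_sink:
  assumes "card Q \<ge> 2"
  shows "\<exists>a\<in>S. \<not> avoids_sink Q z (\<delta> a)"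
proof -
  have "card (Q - {z}) \<ge> 1"
    using assms finite_states sink_in_states by simp
  then obtain p where p: "p \<in> Q" "p \<noteq> z"
    by (metis card.empty Diff_iff ex_in_conv not_one_le_zero singletonI)
  have "(\<lambda>_. z) \<in> Q \<rightarrow> Q"
    using sink_in_states by simp
  then obtain w where w: "w \<in> lists S" "\<forall>q\<in>Q. run \<delta> q w = z"
    using sink_fixing_realised by blast
  then have "\<not> avoids_sink Q z (\<lambda>q. run \<delta> q w)"
    using p unfolding avoids_sink_def by blast
  then show ?thesis
    using avoids_sink_run[of w \<delta> Q z] letters_map_states[OF w(1)] w(1) by auto
qed

lemma ex_noninjective_letter_avoiding_sink:
  assumes "card Q \<ge> 3"
  shows "\<exists>a\<in>S. avoids_sink Q z (\<delta> a) \<and> \<not> inj_on (\<delta> a) Q"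
proof -
  have "card (Q - {z}) \<ge> 2"
    using assms finite_states sink_in_states by simp
  then obtain T where "T \<subseteq> Q - {z}" "card T = 2"
    by (rule obtain_subset_with_card_n)
  then obtain p q where pq: "p \<in> Q" "q \<in> Q" "p \<noteq> z" "q \<noteq> z" "p \<noteq> q"
    by (auto simp: card_2_iff)
  have "id(q := p) \<in> Q \<rightarrow> Q" "(id(q := p)) z = z"
    using pq by auto
  then obtain w where w: "w \<in> lists S" "\<forall>r\<in>Q. run \<delta> r w = (id(q := p)) r"
    using sink_fixing_realised by blast
  have "avoids_sink Q z (\<lambda>r. run \<delta> r w)"
    using w(2) pq unfolding avoids_sink_def by simp
  moreover have "run \<delta> q w = run \<delta> p w"
    using w(2) pq by simp
  then have "\<not> inj_on (\<lambda>r. run \<delta> r w) Q"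
    using pq(1,2,5) inj_onD by metis
  ultimately obtain a where "a \<in> set w" "avoids_sink Q z (\<delta> a)" "\<not> inj_on (\<delta> a) Q"
    using ex_letter_avoiding_sink_not_inj[OF finite_states letters_map_states[OF w(1)]
      letters_fix_sink[OF w(1)]] by blast
  then show ?thesis
    using in_listsD[OF w(1)] by blast
qed

text \<open>Words over a single letter commute, but two transpositions sharing one point do not.\<close>

lemma ex_two_injective_letters:
  assumes "card Q \<ge> 4"
  shows "\<exists>a\<in>S. \<exists>b\<in>S. a \<noteq> b \<and> inj_on (\<delta> a) Q \<and> inj_on (\<delta> b) Q"
proof (rule ccontr)
  assume no_two: "\<not> ?thesis"
  have "card (Q - {z}) \<ge> 3"
    using assms finite_states sink_in_states by simp
  then obtain T where "T \<subseteq> Q - {z}" "card T = 3"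
    by (rule obtain_subset_with_card_n)
  then obtain p q r where pqr: "p \<in> Q" "q \<in> Q" "r \<in> Q" "p \<noteq> z" "q \<noteq> z" "r \<noteq> z"
    "p \<noteq> q" "q \<noteq> r" "p \<noteq> r"
    by (auto simp: card_3_iff)
  have "transpose p q \<in> Q \<rightarrow> Q" "transpose p q z = z"
    using pqr by (auto simp: transpose_def)
  then obtain x where x: "x \<in> lists S" "x \<noteq> []" "\<forall>s\<in>Q. run \<delta> s x = transpose p q s"
    using sink_fixing_realised by blast
  have "transpose q r \<in> Q \<rightarrow> Q" "transpose q r z = z"
    using pqr by (auto simp: transpose_def)
  then obtain y where y: "y \<in> lists S" "\<forall>s\<in>Q. run \<delta> s y = transpose q r s"
    using sink_fixing_realised by blast
  have "inj_on (\<lambda>s. run \<delta> s x) Q" "inj_on (\<lambda>s. run \<delta> s y) Q"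
    using inj_on_cong[of Q "\<lambda>s. run \<delta> s x" "transpose p q"]
      inj_on_cong[of Q "\<lambda>s. run \<delta> s y" "transpose q r"] x(3) y(2) by simp_all
  then have injective: "b \<in> S \<and> inj_on (\<delta> b) Q" if "b \<in> set x \<union> set y" for b
    using that letters_injective_if_run_injective x(1) y(1) by auto
  obtain a where "a \<in> set x"
    using x(2) by (cases x) auto
  then have "\<forall>b\<in>set x \<union> set y. b = a"
    using injective no_two by blast
  then have "x = replicate (length x) a" "y = replicate (length y) a"
    by (simp_all add: replicate_length_same)
  then have "x @ y = y @ x"
    by (metis replicate_add add.commute)
  moreover have "run \<delta> p (x @ y) = r" "run \<delta> p (y @ x) = q"
    using x(3) y(2) pqr by (simp_all add: run_append)
  ultimately show False
    using pqr by simp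
qed

lemma run_transformations_eq_sink_fixing_maps:
  "(\<lambda>w. restrict (\<lambda>q. run \<delta> q w) Q) ` (lists S - {[]}) = sink_fixing_maps Q z"
proof
  show "(\<lambda>w. restrict (\<lambda>q. run \<delta> q w) Q) ` (lists S - {[]}) \<subseteq> sink_fixing_maps Q z"
  proof (rule image_subsetI)
    fix w assume "w \<in> lists S - {[]}"
    then have "(\<lambda>q. run \<delta> q w) \<in> Q \<rightarrow> Q" "run \<delta> z w = z"
      using run_word_in_states run_word_from_sink by auto
    then show "restrict (\<lambda>q. run \<delta> q w) Q \<in> sink_fixing_maps Q z"
      by (simp add: restrict_in_sink_fixing_maps_iff[OF sink_in_states])
  qed
  show "sink_fixing_maps Q z \<subseteq> (\<lambda>w. restrict (\<lambda>q. run \<delta> q w) Q) ` (lists S - {[]})"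
  proof
    fix f assume "f \<in> sink_fixing_maps Q z"
    then have f: "f \<in> Q \<rightarrow> Q" "f z = z" "f = restrict f Q"
      using restrict_in_sink_fixing_maps_iff[OF sink_in_states, of f]
      by (auto simp: sink_fixing_maps_def PiE_restrict)
    then obtain w where w: "w \<in> lists S" "w \<noteq> []" "\<forall>q\<in>Q. run \<delta> q w = f q"
      using sink_fixing_realised by blast
    have "restrict (\<lambda>q. run \<delta> q w) Q = f"
      using w(3) f(3) restrict_eq_restrict_iff[of "\<lambda>q. run \<delta> q w" Q f] by simp
    then show "f \<in> (\<lambda>w. restrict (\<lambda>q. run \<delta> q w) Q) ` (lists S - {[]})"
      using w(1,2) by blast
  qed
qed

theorem min_card_states_le_card_alphabet:
  assumes "finite S"
  shows "min (card Q) 4 \<le> card S"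
proof -
  have card_le: "length as \<le> card S" if "set as \<subseteq> S" "distinct as" for as
    using card_mono[OF assms that(1)] distinct_card[OF that(2)] by simp
  obtain a where a: "a \<in> S" "inj_on (\<delta> a) Q"
    using ex_injective_letter by blast
  then have a_avoids: "avoids_sink Q z (\<delta> a)"
    by (rule injective_letter_avoids_sink)
  have "card Q \<ge> 1"
    using finite_states sink_in_states card_0_eq by fastforce
  then consider "card Q = 1" | "card Q \<ge> 2" "card Q < 3" | "card Q \<ge> 3" "card Q < 4" | "card Q \<ge> 4"
    by linarith
  then show ?thesis
  proof cases
    case 1
    then show ?thesis
      using card_le[of "[a]"] a by simp
  next
    case 2
    then obtain b where "b \<in> S" "\<not> avoids_sink Q z (\<delta> b)"
      using ex_letter_entering_sink by blast
    moreover from this have "a \<noteq> b"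
      using a_avoids by blast
    ultimately show ?thesis
      using card_le[of "[a, b]"] a 2 by auto
  next
    case 3
    then obtain b c where "b \<in> S" "\<not> avoids_sink Q z (\<delta> b)"
      "c \<in> S" "avoids_sink Q z (\<delta> c)" "\<not> inj_on (\<delta> c) Q"
      using ex_letter_entering_sink ex_noninjective_letter_avoiding_sink by fastforce
    moreover from this have "distinct [a, b, c]"
      using a a_avoids by (simp, metis)
    ultimately show ?thesis
      using card_le[of "[a, b, c]"] a 3 by simp
  next
    case 4
    then obtain b c where "b \<in> S" "\<not> avoids_sink Q z (\<delta> b)"
      "c \<in> S" "avoids_sink Q z (\<delta> c)" "\<not> inj_on (\<delta> c) Q"
      using ex_letter_entering_sink ex_noninjective_letter_avoiding_sink by fastforce
    moreover obtain a' a'' where "a' \<in> S" "a'' \<in> S" "a' \<noteq> a''"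
      "inj_on (\<delta> a') Q" "inj_on (\<delta> a'') Q"
      using ex_two_injective_letters 4 by blast
    moreover from this have "avoids_sink Q z (\<delta> a')" "avoids_sink Q z (\<delta> a'')"
      by (simp_all add: injective_letter_avoids_sink)
    ultimately have "distinct [a', a'', b, c] \<and> set [a', a'', b, c] \<subseteq> S"
      by (simp, metis)
    then show ?thesis
      using card_le[of "[a', a'', b, c]"] 4 by simp
  qed
qed

end

lemma transformations_eq_sink_fixing_maps:
  assumes "K0 \<in> quotients S L" "\<And>x. x \<in> lists S \<Longrightarrow> left_quotient S x K0 = K0"
    and "quot_complexity S L = n" "n \<ge> 1" "synt_complexity S L = n ^ (n - 1)"
  shows "transformation S L ` (lists S - {[]}) = sink_fixing_maps (quotients S L) K0"
proof (rule card_subset_eq)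
  have finite: "finite (quotients S L)" and card: "card (quotients S L) = n"
    using assms(3,4) by (auto simp: quot_complexity_def intro: card_ge_0_finite)
  show "finite (sink_fixing_maps (quotients S L) K0)"
    using finite by (simp add: sink_fixing_maps_def finite_PiE)
  show "transformation S L ` (lists S - {[]}) \<subseteq> sink_fixing_maps (quotients S L) K0"
    using transformations_subset_sink_fixing_maps[OF assms(1,2)] by blast
  show "card (transformation S L ` (lists S - {[]})) = card (sink_fixing_maps (quotients S L) K0)"
    using assms(5) card_sink_fixing_maps[OF finite assms(1)] card
    by (simp add: synt_complexity_eq_card_transformations)
qed

lemma quotient_automaton_maximal:
  assumes "L \<subseteq> lists S" "right_ideal S L \<or> prefix_closed L" "quot_complexity S L = n" "n \<ge> 1"
    and "synt_complexity S L = n ^ (n - 1)"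
  obtains K0 where "maximal_sink_automaton S (quotients S L) K0 (\<lambda>a. left_quotient S [a])"
proof -
  let ?Q = "quotients S L"
  obtain K0 where K0: "K0 \<in> ?Q" "\<And>x. x \<in> lists S \<Longrightarrow> left_quotient S x K0 = K0"
    using sink_quotient_exists[OF assms(1,2)] by blast
  have "maximal_sink_automaton S ?Q K0 (\<lambda>a. left_quotient S [a])"
  proof
    show "finite ?Q"
      using assms(3,4) by (auto simp: quot_complexity_def intro: card_ge_0_finite)
    show "K0 \<in> ?Q"
      by (fact K0(1))
    show "left_quotient S [a] \<in> ?Q \<rightarrow> ?Q" if "a \<in> S" for a
      using that left_quotient_in_quotients[of _ S L "[a]"] by simp
    show "left_quotient S [a] K0 = K0" if "a \<in> S" for a
      using that K0(2)[of "[a]"] by simp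
    fix f assume "f \<in> ?Q \<rightarrow> ?Q" "f K0 = K0"
    then have "restrict f ?Q \<in> transformation S L ` (lists S - {[]})"
      using restrict_in_sink_fixing_maps_iff[OF K0(1)]
        transformations_eq_sink_fixing_maps[OF K0 assms(3-5)] by simp
    then obtain w where w: "w \<in> lists S - {[]}" "restrict f ?Q = transformation S L w"
      by blast
    have "run (\<lambda>a. left_quotient S [a]) K w = f K" if "K \<in> ?Q" for K
    proof -
      have "left_quotient S w K = f K"
        using w(2) that by (simp add: transformation_def restrict_eq_restrict_iff)
      then show ?thesis
        using left_quotient_eq_run[OF quotients_subset_lists[OF that]] w(1) by simp
    qed
    then show "\<exists>w\<in>lists S. w \<noteq> [] \<and> (\<forall>K\<in>?Q. run (\<lambda>a. left_quotient S [a]) K w = f K)"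
      using w(1) by blast
  qed
  then show thesis
    by (rule that)
qed

theorem min_card_alphabet_if_synt_complexity_maximal:
  assumes "finite S" "L \<subseteq> lists S" "right_ideal S L \<or> prefix_closed L"
    and "quot_complexity S L = n" "n \<ge> 1" "synt_complexity S L = n ^ (n - 1)"
  shows "min n 4 \<le> card S"
proof -
  obtain K0 where "maximal_sink_automaton S (quotients S L) K0 (\<lambda>a. left_quotient S [a])"
    using quotient_automaton_maximal[OF assms(2-)] .
  from maximal_sink_automaton.min_card_states_le_card_alphabet[OF this assms(1)]
  show ?thesis
    using assms(4) by (simp add: quot_complexity_def)
qed

section \<open>Right ideals with maximal syntactic complexity\<close>

locale maximal_sink_dfa = maximal_sink_automaton +
  fixes i :: 's
  assumes initial_in_states: "i \<in> Q"
    and initial_is_sink_only_if_trivial: "i = z \<Longrightarrow> Q = {z}"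
begin

definition accepted_from :: "'s \<Rightarrow> 'a list set" where
  "accepted_from q = {w \<in> lists S. run \<delta> q w = z}"

lemma left_quotient_accepted_from:
  "x \<in> lists S \<Longrightarrow> left_quotient S x (accepted_from q) = accepted_from (run \<delta> q x)"
  by (auto simp: left_quotient_def accepted_from_def run_append)

lemma reachable:
  assumes "q \<in> Q"
  shows "\<exists>w\<in>lists S. run \<delta> i w = q"
proof (cases "i = z")
  case True
  then have "q = i"
    using assms initial_is_sink_only_if_trivial by blast
  then show ?thesis
    by (intro bexI[of _ "[]"]) simp_all
next
  case False
  let ?f = "\<lambda>p. if p = z then z else q"
  have "?f \<in> Q \<rightarrow> Q"
    using assms sink_in_states by simp
  then obtain w where "w \<in> lists S" "\<forall>p\<in>Q. run \<delta> p w = ?f p"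
    using sink_fixing_realised[of ?f] by auto
  then show ?thesis
    using False initial_in_states by force
qed

lemma Nil_in_accepted_from_iff: "[] \<in> accepted_from q \<longleftrightarrow> q = z"
  by (simp add: accepted_from_def)

lemma inj_on_accepted_from: "inj_on accepted_from Q"
proof (rule inj_onI, rule ccontr)
  fix p q assume pq: "p \<in> Q" "q \<in> Q" "accepted_from p = accepted_from q" "p \<noteq> q"
  then have "p \<noteq> z" "q \<noteq> z"
    using Nil_in_accepted_from_iff by metis+
  have "id(p := z) \<in> Q \<rightarrow> Q"
    using sink_in_states by simp
  then obtain w where w: "w \<in> lists S" "\<forall>r\<in>Q. run \<delta> r w = (id(p := z)) r"
    using sink_fixing_realised[of "id(p := z)"] \<open>p \<noteq> z\<close> by auto
  then have "w \<in> accepted_from p" "w \<notin> accepted_from q"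
    using pq(1,2,4) \<open>q \<noteq> z\<close> by (simp_all add: accepted_from_def)
  then show False
    using pq(3) by simp
qed

lemma accepted_from_subset_lists: "accepted_from q \<subseteq> lists S"
  by (auto simp: accepted_from_def)

lemma quotients_accepted_from: "quotients S (accepted_from i) = accepted_from ` Q"
proof -
  have "quotients S (accepted_from i) = (\<lambda>w. left_quotient S w (accepted_from i)) ` lists S"
    by (auto simp: quotients_def)
  also have "\<dots> = (\<lambda>w. accepted_from (run \<delta> i w)) ` lists S"
    by (rule image_cong[OF refl left_quotient_accepted_from])
  also have "\<dots> = accepted_from ` (\<lambda>w. run \<delta> i w) ` lists S"
    by (simp add: image_image)
  also have "(\<lambda>w. run \<delta> i w) ` lists S = Q"
    using run_word_in_states[OF initial_in_states] reachable by blast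
  finally show ?thesis .
qed

lemma quot_complexity_accepted_from: "quot_complexity S (accepted_from i) = card Q"
  using card_image[OF inj_on_accepted_from]
  by (simp add: quot_complexity_def quotients_accepted_from)

lemma right_ideal_accepted_from: "right_ideal S (accepted_from i)"
proof -
  obtain w where "w \<in> lists S" "run \<delta> i w = z"
    using reachable sink_in_states by blast
  then have "accepted_from i \<noteq> {}"
    by (auto simp: accepted_from_def)
  moreover have "{u @ v |u v. u \<in> accepted_from i \<and> v \<in> lists S} = accepted_from i"
  proof
    have "u @ v \<in> accepted_from i" if "u \<in> accepted_from i" "v \<in> lists S" for u v
      using that by (simp add: accepted_from_def run_append run_word_from_sink)
    then show "{u @ v |u v. u \<in> accepted_from i \<and> v \<in> lists S} \<subseteq> accepted_from i"
      by blast
    show "accepted_from i \<subseteq> {u @ v |u v. u \<in> accepted_from i \<and> v \<in> lists S}"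
      by force
  qed
  ultimately show ?thesis
    by (simp add: right_ideal_def)
qed

lemma synt_complexity_accepted_from:
  "synt_complexity S (accepted_from i) = card Q ^ (card Q - 1)"
proof -
  let ?A = "lists S - {[]}" and ?L = "accepted_from i"
  have "card (transformation S ?L ` ?A) = card ((\<lambda>w. restrict (\<lambda>q. run \<delta> q w) Q) ` ?A)"
  proof (rule card_image_eq_if_same_kernel)
    fix x y assume "x \<in> ?A" "y \<in> ?A"
    then have "transformation S ?L x = transformation S ?L y \<longleftrightarrow>
        (\<forall>q\<in>Q. accepted_from (run \<delta> q x) = accepted_from (run \<delta> q y))"
      unfolding transformation_def quotients_accepted_from
      by (simp add: restrict_eq_restrict_iff left_quotient_accepted_from)
    also have "\<dots> \<longleftrightarrow> (\<forall>q\<in>Q. run \<delta> q x = run \<delta> q y)"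
    proof (rule ball_cong[OF refl])
      fix q assume "q \<in> Q"
      then show "accepted_from (run \<delta> q x) = accepted_from (run \<delta> q y) \<longleftrightarrow> run \<delta> q x = run \<delta> q y"
        using inj_on_eq_iff[OF inj_on_accepted_from] run_word_in_states \<open>x \<in> ?A\<close> \<open>y \<in> ?A\<close>
        by blast
    qed
    also have "\<dots> \<longleftrightarrow> restrict (\<lambda>q. run \<delta> q x) Q = restrict (\<lambda>q. run \<delta> q y) Q"
      by (simp add: restrict_eq_restrict_iff)
    finally show "transformation S ?L x = transformation S ?L y \<longleftrightarrow>
        restrict (\<lambda>q. run \<delta> q x) Q = restrict (\<lambda>q. run \<delta> q y) Q" .
  qed
  then show ?thesis
    by (simp add: synt_complexity_eq_card_transformations run_transformations_eq_sink_fixing_maps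
        card_sink_fixing_maps finite_states sink_in_states)
qed

end

lemma complement_right_ideal:
  assumes "L \<subseteq> lists S" "right_ideal S L"
  shows "prefix_closed (lists S - L)"
    and "quot_complexity S (lists S - L) = quot_complexity S L"
    and "synt_complexity S (lists S - L) = synt_complexity S L"
proof -
  have extend: "u @ v \<in> L" if "u \<in> L" "v \<in> lists S" for u v
    using assms(2) that unfolding right_ideal_def by blast
  show "prefix_closed (lists S - L)"
  proof (unfold prefix_closed_def, intro ballI allI impI)
    fix w u v assume w: "w \<in> lists S - L" "w = u @ v"
    then have "u \<in> lists S" "v \<in> lists S"
      by auto
    moreover have "u \<notin> L"
      using w extend[OF _ \<open>v \<in> lists S\<close>] by blast
    ultimately show "u \<in> lists S - L"
      by blast
  qed
  have "left_quotient S w (lists S - L) = lists S - left_quotient S w L" if "w \<in> lists S" for w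
    using that by (auto simp: left_quotient_def)
  then have "quotients S (lists S - L) = (\<lambda>K. lists S - K) ` quotients S L"
    unfolding quotients_def by blast
  moreover have "inj_on (\<lambda>K. lists S - K) (quotients S L)"
  proof (rule inj_on_inverseI)
    show "lists S - (lists S - K) = K" if "K \<in> quotients S L" for K
      using quotients_subset_lists[OF that] by (simp add: double_diff)
  qed
  ultimately show "quot_complexity S (lists S - L) = quot_complexity S L"
    by (simp add: quot_complexity_def card_image)
  have "synt_cong S (lists S - L) = synt_cong S L"
    unfolding synt_cong_def by (rule Collect_cong) auto
  then show "synt_complexity S (lists S - L) = synt_complexity S L"
    by (simp add: synt_complexity_def)
qed

section \<open>Generators of the sink-fixing transformations\<close>

definition rotation :: "nat \<Rightarrow> nat \<Rightarrow> nat" where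
  "rotation n q = (if q = 0 then 0 else if q = n - 1 then 1 else q + 1)"

lemma rotation_funpow:
  assumes "1 \<le> q" "q \<le> n - 1"
  shows "(rotation n ^^ k) q = (q - 1 + k) mod (n - 1) + 1"
proof (induction k)
  case 0
  then show ?case using assms by simp
next
  case (Suc k)
  then show ?case
    by (auto simp: rotation_def mod_Suc)
qed

lemma rotation_funpow_period: "q < n \<Longrightarrow> (rotation n ^^ (n - 1)) q = q"
proof (cases "q = 0")
  case True
  have "(rotation n ^^ k) 0 = 0" for k
    by (induction k) (simp_all add: rotation_def)
  then show ?thesis
    using True by simp
next
  case False
  assume "q < n"
  have "(q - 1 + (n - 1)) mod (n - 1) = (q - 1) mod (n - 1)"
    by (rule mod_add_self2)
  also have "\<dots> = q - 1"
    using \<open>q < n\<close> False by simp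
  finally show ?thesis
    using rotation_funpow[of q n "n - 1"] \<open>q < n\<close> False by simp
qed

lemma rotation_conj_transpose:
  assumes "1 \<le> i" "i + 2 \<le> n - 1" "q < n"
  shows "rotation n (transpose i (i + 1) q) = transpose (i + 1) (i + 2) (rotation n q)"
  using assms by (auto simp: rotation_def transpose_def)

lemma ex_permutes_two_points:
  assumes "a \<in> A" "b \<in> A" "c \<in> A" "d \<in> A" "a \<noteq> b" "c \<noteq> d"
  obtains p where "p permutes A" "p a = c" "p b = d"
proof
  let ?b = "transpose a c b"
  show "transpose ?b d \<circ> transpose a c permutes A"
    using assms by (intro permutes_compose permutes_swap_id) (auto simp: transpose_def)
  show "(transpose ?b d \<circ> transpose a c) a = c" "(transpose ?b d \<circ> transpose a c) b = d"
    using assms by (auto simp: transpose_def)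
qed

lemma card_image_fun_upd_non_inj:
  assumes "finite R" "i \<in> R" "j \<in> R" "i \<noteq> j" "f i = f j" "y \<notin> f ` R"
  shows "card (f(i := y) ` R) = Suc (card (f ` R))"
proof -
  have "f ` (R - {i}) = f ` R"
    using assms(2-5) by (auto simp: image_iff)
  then have "f(i := y) ` R = insert y (f ` R)"
    by (simp only: fun_upd_image assms(2) if_True)
  then show ?thesis
    using assms(1,6) by simp
qed

text \<open>A transformation of {..<n} is represented by any function on nat agreeing with it on {..<n}.\<close>

locale transformation_semigroup =
  fixes n :: nat and P :: "(nat \<Rightarrow> nat) \<Rightarrow> bool"
  assumes agree: "P f \<Longrightarrow> (\<And>q. q < n \<Longrightarrow> g q = f q) \<Longrightarrow> P g"
    and maps_states: "P f \<Longrightarrow> f \<in> {..<n} \<rightarrow> {..<n}"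
    and comp: "P f \<Longrightarrow> P g \<Longrightarrow> P (g \<circ> f)"

locale sink_generators = transformation_semigroup +
  assumes three_le: "3 \<le> n"
    and rotation: "P (rotation n)"
    and transpose_1_2: "P (transpose 1 2)"
    and merge: "P (id(n - 1 := 1))"
    and kill: "P (id(n - 1 := 0))"
begin

lemma identity: "P id"
  using comp[OF transpose_1_2 transpose_1_2] by (simp add: fun_eq_iff)

lemma funpow: "P f \<Longrightarrow> P (f ^^ k)"
proof (induction k)
  case 0
  then show ?case
    using identity by (simp only: funpow.simps(1))
next
  case (Suc k)
  then show ?case
    using comp[OF Suc.prems Suc.IH] by (simp only: funpow_Suc_right)
qed

lemma adjacent_transpose: "1 \<le> i \<Longrightarrow> i + 1 \<le> n - 1 \<Longrightarrow> P (transpose i (i + 1))"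
proof (induction i rule: nat_induct_at_least)
  case base
  then show ?case
    using transpose_1_2 by (simp add: numeral_2_eq_2)
next
  case (Suc i)
  let ?r' = "rotation n ^^ (n - 2)"
  have inverse: "rotation n (?r' q) = q" if "q < n" for q
  proof -
    have "rotation n (?r' q) = (rotation n ^^ Suc (n - 2)) q"
      by simp
    also have "Suc (n - 2) = n - 1"
      using three_le by simp
    finally show ?thesis
      using rotation_funpow_period[OF that] by simp
  qed
  have "P (rotation n \<circ> transpose i (i + 1) \<circ> ?r')"
    using Suc by (intro comp funpow rotation) simp_all
  then show ?case
  proof (rule agree)
    fix q assume "q < n"
    moreover have "?r' q < n"
      using maps_states[OF funpow[OF rotation]] \<open>q < n\<close> by auto
    ultimately show "transpose (Suc i) (Suc i + 1) q = (rotation n \<circ> transpose i (i + 1) \<circ> ?r') q"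
      using rotation_conj_transpose[of i n "?r' q"] Suc.hyps Suc.prems inverse by simp
  qed
qed

lemma transpose_upward: "1 \<le> i \<Longrightarrow> i + 1 + d \<le> n - 1 \<Longrightarrow> P (transpose i (i + 1 + d))"
proof (induction d)
  case 0
  then show ?case
    using adjacent_transpose by simp
next
  case (Suc d)
  let ?k = "i + 1 + d"
  have "P (transpose ?k (?k + 1) \<circ> transpose i ?k \<circ> transpose ?k (?k + 1))"
    using Suc by (intro comp adjacent_transpose) simp_all
  moreover have "transpose ?k (?k + 1) \<circ> transpose i ?k \<circ> transpose ?k (?k + 1)
      = transpose i (i + 1 + Suc d)"
    by (auto simp: fun_eq_iff transpose_def)
  ultimately show ?case
    by simp
qed

lemma transpose:
  assumes "i \<in> {1..n - 1}" "j \<in> {1..n - 1}"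
  shows "P (transpose i j)"
proof -
  consider "i < j" | "i = j" | "j < i"
    by linarith
  then show ?thesis
  proof cases
    case 1
    then show ?thesis
      using transpose_upward[of i "j - i - 1"] assms by simp
  next
    case 2
    then show ?thesis
      using identity by simp
  next
    case 3
    then show ?thesis
      using transpose_upward[of j "i - j - 1"] assms by (simp add: transpose_commute)
  qed
qed

lemma permutation:
  assumes "p permutes {1..n - 1}"
  shows "P p"
  using assms finite_atLeastAtMost
proof (induction rule: permutes_induct)
  case id
  then show ?case by (rule identity)
next
  case (swap a b p)
  show ?case
    by (rule comp[OF swap.IH transpose]) (use swap.hyps in blast)+
qed

lemma merge_states:
  assumes "i \<in> {1..n - 1}" "j \<in> {1..n - 1}" "i \<noteq> j"
  shows "P (id(i := j))"
proof -
  have "n - 1 \<in> {1..n - 1}" "1 \<in> {1..n - 1}" "n - 1 \<noteq> 1"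
    using three_le by auto
  then obtain p where p: "p permutes {1..n - 1}" "p i = n - 1" "p j = 1"
    using ex_permutes_two_points[OF assms(1,2)] assms(3) by blast
  have "P (inv p \<circ> id(n - 1 := 1) \<circ> p)"
    using p(1) by (intro comp merge permutation permutes_inv)
  moreover have "inv p \<circ> id(n - 1 := 1) \<circ> p = id(i := j)"
  proof
    fix q
    have "p q = n - 1 \<longleftrightarrow> q = i"
      by (metis p(2) permutes_inj[OF p(1)] inj_eq)
    moreover have "inv p 1 = j" "inv p (p q) = q"
      using p(1,3) by (simp_all add: permutes_inv_eq permutes_inverses)
    ultimately show "(inv p \<circ> id(n - 1 := 1) \<circ> p) q = (id(i := j)) q"
      by auto
  qed
  ultimately show ?thesis
    by simp
qed

lemma kill_state:
  assumes "i \<in> {1..n - 1}"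
  shows "P (id(i := 0))"
proof -
  have "P (transpose i (n - 1) \<circ> id(n - 1 := 0) \<circ> transpose i (n - 1))"
    using assms three_le by (intro comp kill transpose) auto
  moreover have "transpose i (n - 1) \<circ> id(n - 1 := 0) \<circ> transpose i (n - 1) = id(i := 0)"
    using assms by (auto simp: fun_eq_iff transpose_def)
  ultimately show ?thesis
    by simp
qed

lemma injective_nonsink_preserving:
  assumes "f 0 = 0" "f ` {1..n - 1} \<subseteq> {1..n - 1}" "inj_on f {1..n - 1}"
  shows "P f"
proof -
  let ?R = "{1..n - 1}"
  define p where "p q = (if q \<in> ?R then f q else q)" for q
  have "bij_betw f ?R ?R"
    using endo_inj_surj[OF _ assms(2,3)] assms(3) by (simp add: bij_betw_def)
  then have "bij_betw p ?R ?R"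
    using bij_betw_cong[of ?R p f ?R] by (simp add: p_def)
  then have "p permutes ?R"
    by (rule bij_imp_permutes) (auto simp: p_def)
  then have "P p"
    by (rule permutation)
  then show ?thesis
  proof (rule agree)
    fix q assume "q < n"
    then show "f q = p q"
      using assms(1) by (cases "q = 0") (auto simp: p_def)
  qed
qed

text \<open>A non-injective map on the non-sink states factors through a merge, with a strictly
  larger image left to generate.\<close>

lemma nonsink_preserving:
  assumes "f 0 = 0" "f ` {1..n - 1} \<subseteq> {1..n - 1}"
  shows "P f"
  using assms
proof (induction "n - 1 - card (f ` {1..n - 1})" arbitrary: f rule: less_induct)
  case less
  let ?R = "{1..n - 1}"
  show ?case
  proof (cases "inj_on f ?R")
    case True
    then show ?thesis
      using injective_nonsink_preserving less.prems by blast
  next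
    case False
    then obtain i j where ij: "i \<in> ?R" "j \<in> ?R" "i \<noteq> j" "f i = f j"
      unfolding inj_on_def by blast
    have "card (f ` ?R) \<noteq> card ?R"
      using False eq_card_imp_inj_on[of ?R f] by auto
    moreover have "card (f ` ?R) \<le> card ?R"
      using card_mono[OF _ less.prems(2)] by simp
    ultimately have smaller: "card (f ` ?R) < n - 1"
      by simp
    then have "f ` ?R \<noteq> ?R"
      by auto
    then obtain y where y: "y \<in> ?R" "y \<notin> f ` ?R"
      using less.prems(2) by blast
    have "card (f(i := y) ` ?R) = Suc (card (f ` ?R))"
      using card_image_fun_upd_non_inj[OF _ ij y(2)] by simp
    then have "P (f(i := y))"
      using smaller less.prems ij(1) y(1) by (intro less.hyps) auto
    then have "P (f(i := y) \<circ> id(i := j))"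
      using ij by (intro comp merge_states)
    moreover have "f(i := y) \<circ> id(i := j) = f"
      using ij by (auto simp: fun_eq_iff)
    ultimately show ?thesis
      by simp
  qed
qed

theorem sink_fixing:
  assumes "f 0 = 0" "f \<in> {..<n} \<rightarrow> {..<n}"
  shows "P f"
  using assms
proof (induction "card {q \<in> {1..n - 1}. f q = 0}" arbitrary: f rule: less_induct)
  case less
  show ?case
  proof (cases "\<exists>i\<in>{1..n - 1}. f i = 0")
    case False
    have "f q \<in> {1..n - 1}" if "q \<in> {1..n - 1}" for q
    proof -
      have "f q < n" "f q \<noteq> 0"
        using funcset_mem[OF less.prems(2)] False that by auto
      then show ?thesis
        by simp
    qed
    then show ?thesis
      using nonsink_preserving less.prems(1) by blast
  next
    case True
    then obtain i where i: "i \<in> {1..n - 1}" "f i = 0"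
      by blast
    have "{q \<in> {1..n - 1}. (f(i := i)) q = 0} \<subset> {q \<in> {1..n - 1}. f q = 0}"
      using i by auto
    moreover have "finite {q \<in> {1..n - 1}. f q = 0}"
      by (rule finite_subset[of _ "{1..n - 1}"]) auto
    ultimately have "card {q \<in> {1..n - 1}. (f(i := i)) q = 0} < card {q \<in> {1..n - 1}. f q = 0}"
      by (rule psubset_card_mono[rotated])
    then have "P (f(i := i))"
      using less.prems i by (intro less.hyps) auto
    then have "P (f(i := i) \<circ> id(i := 0))"
      using i(1) by (intro comp kill_state)
    moreover have "f(i := i) \<circ> id(i := 0) = f"
      using i less.prems(1) by (auto simp: fun_eq_iff)
    ultimately show ?thesis
      by simp
  qed
qed

end

definition generators :: "nat \<Rightarrow> (nat \<Rightarrow> nat) list" where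
  "generators n =
    (if n = 1 then [id]
     else if n = 2 then [id, id(1 := 0)]
     else if n = 3 then [transpose 1 2, id(2 := 1), id(2 := 0)]
     else [rotation n, transpose 1 2, id(n - 1 := 1), id(n - 1 := 0)])"

lemma length_generators: "1 \<le> n \<Longrightarrow> length (generators n) = min n 4"
  by (simp add: generators_def)

lemma generators_fix_sink: "1 \<le> n \<Longrightarrow> g \<in> set (generators n) \<Longrightarrow> g 0 = 0"
  by (auto simp: generators_def rotation_def transpose_def split: if_splits)

lemma generators_map_states: "1 \<le> n \<Longrightarrow> g \<in> set (generators n) \<Longrightarrow> g \<in> {..<n} \<rightarrow> {..<n}"
  by (auto simp: generators_def rotation_def transpose_def split: if_splits)

lemma (in transformation_semigroup) generated_by_generators:
  assumes "1 \<le> n" "\<forall>g\<in>set (generators n). P g" "f 0 = 0" "f \<in> {..<n} \<rightarrow> {..<n}"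
  shows "P f"
proof -
  consider "n = 1" | "n = 2" | "n = 3" | "n \<ge> 4"
    using assms(1) by linarith
  then show ?thesis
  proof cases
    case 1
    show ?thesis
    proof (rule agree[of id])
      show "P id"
        using assms(2) 1 by (simp add: generators_def)
      show "f q = id q" if "q < n" for q
        using that 1 assms(3) by simp
    qed
  next
    case 2
    let ?g = "if f 1 = 0 then id(1 := 0) else id"
    show ?thesis
    proof (rule agree[of ?g])
      show "P ?g"
        using assms(2) 2 by (simp add: generators_def)
      fix q assume "q < n"
      moreover have "f 1 < 2"
        using funcset_mem[OF assms(4), of 1] 2 by simp
      ultimately show "f q = ?g q"
        using 2 assms(3) by (auto simp: less_2_cases_iff)
    qed
  next
    case 3
    then interpret sink_generators n P
    proof unfold_locales
      show "P (rotation n)"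
      proof (rule agree[of "transpose 1 2"])
        show "P (transpose 1 2)"
          using assms(2) 3 by (simp add: generators_def)
        fix q assume "q < n"
        then have "q = 0 \<or> q = 1 \<or> q = 2"
          using 3 by linarith
        then show "rotation n q = transpose 1 2 q"
          using 3 by (auto simp: rotation_def)
      qed
    qed (use assms(2) 3 in \<open>simp_all add: generators_def\<close>)
    show ?thesis
      using sink_fixing assms(3,4) .
  next
    case 4
    then interpret sink_generators n P
      by unfold_locales (use assms(2) in \<open>simp_all add: generators_def\<close>)
    show ?thesis
      using sink_fixing assms(3,4) .
  qed
qed

lemma transformation_semigroup_of_words:
  assumes "\<And>a. a \<in> S \<Longrightarrow> \<delta> a \<in> {..<n} \<rightarrow> {..<n}"
  shows "transformation_semigroup n (\<lambda>f. \<exists>w\<in>lists S. w \<noteq> [] \<and> (\<forall>q<n. run \<delta> q w = f q))"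
proof
  fix f g assume "\<exists>w\<in>lists S. w \<noteq> [] \<and> (\<forall>q<n. run \<delta> q w = f q)" "\<And>q. q < n \<Longrightarrow> g q = f q"
  then show "\<exists>w\<in>lists S. w \<noteq> [] \<and> (\<forall>q<n. run \<delta> q w = g q)"
    by metis
next
  fix f assume "\<exists>w\<in>lists S. w \<noteq> [] \<and> (\<forall>q<n. run \<delta> q w = f q)"
  then obtain w where "w \<in> lists S" "\<forall>q<n. run \<delta> q w = f q"
    by blast
  moreover have "run \<delta> q w < n" if "q < n" "w \<in> lists S" for q
    using run_in_states[of q "{..<n}" w \<delta>] assms that by auto
  ultimately show "f \<in> {..<n} \<rightarrow> {..<n}"
    by auto
next
  fix f g
  assume "\<exists>w\<in>lists S. w \<noteq> [] \<and> (\<forall>q<n. run \<delta> q w = f q)"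
    and "\<exists>w\<in>lists S. w \<noteq> [] \<and> (\<forall>q<n. run \<delta> q w = g q)"
  then obtain x y where x: "x \<in> lists S" "x \<noteq> []" "\<forall>q<n. run \<delta> q x = f q"
    and y: "y \<in> lists S" "\<forall>q<n. run \<delta> q y = g q"
    by blast
  moreover have "run \<delta> q x < n" if "q < n" for q
    using run_in_states[of q "{..<n}" x \<delta>] assms that x(1) by auto
  ultimately have "\<forall>q<n. run \<delta> q (x @ y) = (g \<circ> f) q"
    by (simp add: run_append)
  then show "\<exists>w\<in>lists S. w \<noteq> [] \<and> (\<forall>q<n. run \<delta> q w = (g \<circ> f) q)"
    using x(1,2) y(1) by (intro bexI[of _ "x @ y"]) simp_all
qed

lemma ex_letter_assignment:
  assumes "finite S" "length gs \<le> card S"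
  obtains \<delta> :: "'a \<Rightarrow> 'b \<Rightarrow> 'b" where "\<And>a. \<delta> a = id \<or> \<delta> a \<in> set gs"
    and "\<And>g. g \<in> set gs \<Longrightarrow> \<exists>a\<in>S. \<delta> a = g"
proof -
  obtain T where T: "T \<subseteq> S" "card T = length gs" "finite T"
    using obtain_subset_with_card_n[OF assms(2)] by blast
  obtain as where "set as = T" "distinct as"
    using finite_distinct_list[OF T(3)] by blast
  then have as: "set as \<subseteq> S" "distinct as" "length as = length gs"
    using T(1,2) distinct_card[of as] by simp_all
  define \<delta> where "\<delta> a = (case map_of (zip as gs) a of Some g \<Rightarrow> g | None \<Rightarrow> id)" for a
  show thesis
  proof (rule that)
    show "\<delta> a = id \<or> \<delta> a \<in> set gs" for a
    proof (cases "map_of (zip as gs) a")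
      case None
      then show ?thesis
        by (simp add: \<delta>_def)
    next
      case (Some g)
      then have "g \<in> set gs"
        by (blast dest: map_of_SomeD set_zip_rightD)
      then show ?thesis
        using Some by (simp add: \<delta>_def)
    qed
    fix g assume "g \<in> set gs"
    then obtain k where "k < length as" "g = gs ! k"
      using as(3) in_set_conv_nth[of g gs] by auto
    moreover have "\<delta> (as ! k) = gs ! k" if "k < length as" for k
      using map_of_zip_nth[OF as(3,2)] that as(3) by (simp add: \<delta>_def)
    ultimately have "as ! k \<in> S" "\<delta> (as ! k) = g"
      using as(1) nth_mem by auto
    then show "\<exists>a\<in>S. \<delta> a = g"
      by blast
  qed
qed

text \<open>State 0 is the sink and n - 1 the initial state.\<close>

theorem ex_right_ideal_max_synt_complexity:
  assumes "finite S" "1 \<le> n" "min n 4 \<le> card S"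
  shows "\<exists>L. L \<subseteq> lists S \<and> right_ideal S L \<and> quot_complexity S L = n \<and> synt_complexity S L = n ^ (n - 1)"
proof -
  obtain \<delta> :: "'a \<Rightarrow> nat \<Rightarrow> nat" where \<delta>_cases: "\<And>a. \<delta> a = id \<or> \<delta> a \<in> set (generators n)"
    and generator_letters: "\<And>g. g \<in> set (generators n) \<Longrightarrow> \<exists>a\<in>S. \<delta> a = g"
    using ex_letter_assignment[OF assms(1)] assms(2,3) length_generators by metis
  have \<delta>_maps: "\<delta> a \<in> {..<n} \<rightarrow> {..<n}" for a
    using \<delta>_cases[of a] generators_map_states[OF assms(2)] by auto
  have \<delta>_sink: "\<delta> a 0 = 0" for a
    using \<delta>_cases[of a] generators_fix_sink[OF assms(2)] by auto
  interpret words: transformation_semigroup n "\<lambda>f. \<exists>w\<in>lists S. w \<noteq> [] \<and> (\<forall>q<n. run \<delta> q w = f q)"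
    by (rule transformation_semigroup_of_words[OF \<delta>_maps])
  have generators: "\<exists>w\<in>lists S. w \<noteq> [] \<and> (\<forall>q<n. run \<delta> q w = g q)" if g: "g \<in> set (generators n)" for g
  proof -
    obtain a where "a \<in> S" "\<delta> a = g"
      using generator_letters[OF g] by blast
    then show ?thesis
      by (intro bexI[of _ "[a]"]) auto
  qed
  interpret maximal_sink_dfa S "{..<n}" 0 \<delta> "n - 1"
  proof
    show "finite {..<n}" "0 \<in> {..<n}" "n - 1 \<in> {..<n}"
      using assms(2) by auto
    show "\<delta> a \<in> {..<n} \<rightarrow> {..<n}" "\<delta> a 0 = 0" for a
      by (fact \<delta>_maps, fact \<delta>_sink)
    show "n - 1 = 0 \<Longrightarrow> {..<n} = {0}"
      using assms(2) by auto
    fix f assume "f \<in> {..<n} \<rightarrow> {..<n}" "f 0 = 0"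
    then have "\<exists>w\<in>lists S. w \<noteq> [] \<and> (\<forall>q<n. run \<delta> q w = f q)"
      using words.generated_by_generators[OF assms(2)] generators by blast
    then show "\<exists>w\<in>lists S. w \<noteq> [] \<and> (\<forall>q\<in>{..<n}. run \<delta> q w = f q)"
      by auto
  qed
  show ?thesis
    using accepted_from_subset_lists right_ideal_accepted_from
      quot_complexity_accepted_from synt_complexity_accepted_from by auto
qed


theorem theorem2:
  shows "(\<forall>(S :: 'a set) L n. finite S \<and> S \<noteq> {} \<and> L \<subseteq> lists S \<and> n \<ge> 1 \<and>
            quot_complexity S L = n \<and> (right_ideal S L \<or> prefix_closed L)
            \<longrightarrow> synt_complexity S L \<le> n ^ (n - 1))
       \<and> (\<forall>(S :: 'a set) n. finite S \<and> n \<ge> 1 \<and> card S \<ge> min n 4 \<longrightarrow>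
            (\<exists>L. L \<subseteq> lists S \<and> right_ideal S L \<and> quot_complexity S L = n
                 \<and> synt_complexity S L = n ^ (n - 1))
          \<and> (\<exists>L. L \<subseteq> lists S \<and> prefix_closed L \<and> quot_complexity S L = n
                 \<and> synt_complexity S L = n ^ (n - 1)))
       \<and> (\<forall>(S :: 'a set) L n. finite S \<and> S \<noteq> {} \<and> L \<subseteq> lists S \<and> n \<ge> 1 \<and>
            card S < min n 4 \<and> quot_complexity S L = n \<and> (right_ideal S L \<or> prefix_closed L)
            \<longrightarrow> synt_complexity S L \<noteq> n ^ (n - 1))"
proof (intro conjI allI impI)
  fix S :: "'a set" and L n
  assume "finite S \<and> S \<noteq> {} \<and> L \<subseteq> lists S \<and> n \<ge> 1 \<and>
    quot_complexity S L = n \<and> (right_ideal S L \<or> prefix_closed L)"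
  then show "synt_complexity S L \<le> n ^ (n - 1)"
    using synt_complexity_le by blast
next
  fix S :: "'a set" and n
  assume "finite S \<and> n \<ge> 1 \<and> card S \<ge> min n 4"
  then obtain L where L: "L \<subseteq> lists S" "right_ideal S L" "quot_complexity S L = n"
    "synt_complexity S L = n ^ (n - 1)"
    using ex_right_ideal_max_synt_complexity by blast
  then show "\<exists>L. L \<subseteq> lists S \<and> right_ideal S L \<and> quot_complexity S L = n
      \<and> synt_complexity S L = n ^ (n - 1)"
    by blast
  show "\<exists>L. L \<subseteq> lists S \<and> prefix_closed L \<and> quot_complexity S L = n
      \<and> synt_complexity S L = n ^ (n - 1)"
    using complement_right_ideal[OF L(1,2)] L(3,4) by (intro exI[of _ "lists S - L"]) auto
next
  fix S :: "'a set" and L n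
  assume "finite S \<and> S \<noteq> {} \<and> L \<subseteq> lists S \<and> n \<ge> 1 \<and>
    card S < min n 4 \<and> quot_complexity S L = n \<and> (right_ideal S L \<or> prefix_closed L)"
  then show "synt_complexity S L \<noteq> n ^ (n - 1)"
    using min_card_alphabet_if_synt_complexity_maximal[of S L n] by fastforce
qed

end
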